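(* Let $T$ be the theory of structures $(X,R,f)$ where $R$ is a reflexive and transitive binary relation and $f$ is a unary operation which strictly preserves $R$, namely, for all $d,e$: if $d\,R\,e$ and $d\neq e$, then $f(d)\,R\,f(e)$ and $f(d)\neq f(e)$. Then $T$ does not have the amalgamation property.
   Context: A theory has the amalgamation property (AP) if whenever $\mathbf{A},\mathbf{B},\mathbf{C}$ are models with $\mathbf{C}\subseteq\mathbf{A}$, $\mathbf{C}\subseteq\mathbf{B}$ and $C=A\cap B$, there are a model $\mathbf{D}$ and embeddings of $\mathbf{A}$ and $\mathbf{B}$ into $\mathbf{D}$ which agree on $C$. *)

theory Defs
  imports Main
begin

text \<open>A structure (X, R, f): carrier X, binary relation R, unary operation f.
  The relation and operation are only meaningful on the carrier.\<close>

type_synonym 'a str = "'a set \<times> ('a \<Rightarrow> 'a \<Rightarrow> bool) \<times> ('a \<Rightarrow> 'a)"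

definition carr :: "'a str \<Rightarrow> 'a set" where "carr S = fst S"
definition rel :: "'a str \<Rightarrow> 'a \<Rightarrow> 'a \<Rightarrow> bool" where "rel S = fst (snd S)"
definition op :: "'a str \<Rightarrow> 'a \<Rightarrow> 'a" where "op S = snd (snd S)"

definition is_model :: "'a str \<Rightarrow> bool" where
  "is_model S \<longleftrightarrow>
     (\<forall>d e. rel S d e \<longrightarrow> d \<in> carr S \<and> e \<in> carr S) \<and>
     (\<forall>d\<in>carr S. op S d \<in> carr S) \<and>
     (\<forall>d\<in>carr S. rel S d d) \<and>
     (\<forall>d\<in>carr S. \<forall>e\<in>carr S. \<forall>g\<in>carr S. rel S d e \<longrightarrow> rel S e g \<longrightarrow> rel S d g) \<and>
     (\<forall>d\<in>carr S. \<forall>e\<in>carr S. rel S d e \<and> d \<noteq> e \<longrightarrow>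
          rel S (op S d) (op S e) \<and> op S d \<noteq> op S e)"

definition substr :: "'a str \<Rightarrow> 'a str \<Rightarrow> bool" where
  "substr C A \<longleftrightarrow> carr C \<subseteq> carr A \<and>
     (\<forall>d\<in>carr C. \<forall>e\<in>carr C. rel C d e \<longleftrightarrow> rel A d e) \<and>
     (\<forall>d\<in>carr C. op C d = op A d)"

definition embedding :: "('a \<Rightarrow> 'b) \<Rightarrow> 'a str \<Rightarrow> 'b str \<Rightarrow> bool" where
  "embedding g A D \<longleftrightarrow> g ` carr A \<subseteq> carr D \<and> inj_on g (carr A) \<and>
     (\<forall>d\<in>carr A. \<forall>e\<in>carr A. rel A d e \<longleftrightarrow> rel D (g d) (g e)) \<and>
     (\<forall>d\<in>carr A. g (op A d) = op D (g d))"

definition amalgamation_property :: "'a itself \<Rightarrow> 'b itself \<Rightarrow> bool" where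
  "amalgamation_property _ _ \<longleftrightarrow>
     (\<forall>A B C :: 'a str. is_model A \<and> is_model B \<and> is_model C \<and>
        substr C A \<and> substr C B \<and> carr C = carr A \<inter> carr B \<longrightarrow>
        (\<exists>(D :: 'b str) g h. is_model D \<and> embedding g A D \<and> embedding h B D \<and>
            (\<forall>c\<in>carr C. g c = h c)))"

end

theory Submission
  imports Defs
begin

text \<open>
  Start from C = {0,1,2}, where 1 and 2 are R-equivalent and f maps 0 to 1 and 1, 2 to
  themselves. Let A extend C by a point 3 below 0 and B extend C by a point 4 above 0, both
  sent to 2 by f; strict preservation holds because f 3 = 2 R 1 = f 0 and f 0 = 1 R 2 = f 4.
  In an amalgam D the images satisfy 3 R 0 R 4, hence 3 R 4, and f 3 = 2 = f 4. Strict
  preservation then forces 3 = 4 in D, and so 0 R 4 = 3 there, which the embedding of A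
  reflects to 0 R 3 in A, a contradiction.
\<close>

lemma model_rel_in_carr:
  assumes "is_model S" and "rel S d e"
  shows "d \<in> carr S" "e \<in> carr S"
  using assms unfolding is_model_def by blast+

lemma model_rel_trans:
  assumes "is_model S" and "rel S d e" and "rel S e g"
  shows "rel S d g"
  using assms model_rel_in_carr[OF assms(1)] unfolding is_model_def by blast

lemma model_eq_if_rel_op_eq:
  assumes "is_model S" and "rel S d e" and "op S d = op S e"
  shows "d = e"
  using assms model_rel_in_carr[OF assms(1,2)] unfolding is_model_def by blast

lemma embedding_rel_iff:
  "embedding g A D \<Longrightarrow> d \<in> carr A \<Longrightarrow> e \<in> carr A \<Longrightarrow> rel D (g d) (g e) \<longleftrightarrow> rel A d e"
  unfolding embedding_def by blast

lemma embedding_op: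
  "embedding g A D \<Longrightarrow> d \<in> carr A \<Longrightarrow> op D (g d) = g (op A d)"
  unfolding embedding_def by simp

definition refl_str :: "'a set \<Rightarrow> ('a \<times> 'a) set \<Rightarrow> ('a \<Rightarrow> 'a) \<Rightarrow> 'a str" where
  "refl_str X P f = (X, \<lambda>x y. (x \<in> X \<and> x = y) \<or> (x, y) \<in> P, f)"

lemma carr_refl_str [simp]: "carr (refl_str X P f) = X"
  and rel_refl_str [simp]: "rel (refl_str X P f) x y \<longleftrightarrow> (x \<in> X \<and> x = y) \<or> (x, y) \<in> P"
  and op_refl_str [simp]: "op (refl_str X P f) = f"
  unfolding refl_str_def carr_def rel_def op_def by simp_all

definition collapse :: "nat \<Rightarrow> nat" where
  "collapse x = (if x \<le> 1 then 1 else 2)"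

definition base_str :: "nat str" where
  "base_str = refl_str {0, 1, 2} {(1, 2), (2, 1)} collapse"

definition below_str :: "nat str" where
  "below_str = refl_str {0, 1, 2, 3} {(1, 2), (2, 1), (3, 0)} collapse"

definition above_str :: "nat str" where
  "above_str = refl_str {0, 1, 2, 4} {(1, 2), (2, 1), (0, 4)} collapse"

lemma is_model_base_str: "is_model base_str"
  and is_model_below_str: "is_model below_str"
  and is_model_above_str: "is_model above_str"
  unfolding is_model_def base_str_def below_str_def above_str_def collapse_def by auto

lemma substr_base_below_str: "substr base_str below_str"
  and substr_base_above_str: "substr base_str above_str"
  unfolding substr_def base_str_def below_str_def above_str_def by auto

lemma carr_base_str_eq_inter: "carr base_str = carr below_str \<inter> carr above_str"
  unfolding base_str_def below_str_def above_str_def by auto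

lemma no_amalgam_below_above_str:
  assumes D: "is_model D"
    and g: "embedding g below_str D" and h: "embedding h above_str D"
    and agree: "\<forall>c\<in>carr base_str. g c = h c"
  shows False
proof -
  have g0: "g 0 = h 0" and g2: "g 2 = h 2"
    using agree by (simp_all add: base_str_def)
  have "rel D (g 3) (g 0)"
    using embedding_rel_iff[OF g] by (simp add: below_str_def)
  moreover have h04: "rel D (h 0) (h 4)"
    using embedding_rel_iff[OF h] by (simp add: above_str_def)
  ultimately have "rel D (g 3) (h 4)"
    using model_rel_trans[OF D] g0 by simp
  moreover have "op D (g 3) = op D (h 4)"
    using embedding_op[OF g, of 3] embedding_op[OF h, of 4] g2
    by (simp add: below_str_def above_str_def collapse_def)
  ultimately have "g 3 = h 4"
    using model_eq_if_rel_op_eq[OF D] by blast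
  then have "rel D (g 0) (g 3)"
    using h04 g0 by simp
  then show False
    using embedding_rel_iff[OF g] by (simp add: below_str_def)
qed

theorem proposition4p2:
  shows "\<not> amalgamation_property TYPE(nat) TYPE('b)"
  unfolding amalgamation_property_def
  using is_model_base_str is_model_below_str is_model_above_str
    substr_base_below_str substr_base_above_str carr_base_str_eq_inter
    no_amalgam_below_above_str
  by blast

end
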